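(* Among the triangle centers $X_1,\dots,X_{29}$, exactly $X_{16}$, $X_{23}$, $X_{26}$ have the property that there exists an acute triangle $ABC$ with $a<b<c$ in which $\mathrm{Atrace}(X_n)$ lies on the extension of $BC$ beyond $C$. For every other $n\le 29$, in every acute triangle with $a<b<c$, $\mathrm{Atrace}(X_n)$ does not lie on the extension of $BC$ beyond $C$.
   Context: $X_n$ denotes the $n$-th triangle center listed in Kimberling's Encyclopedia of Triangle Centers (ETC), given by barycentric coordinates in terms of $a=BC$, $b=CA$, $c=AB$. For a point $P=(p:q:r)\ne A$, $\mathrm{Atrace}(P)$ is the intersection of line $AP$ with line $BC$, namely $(0:q:r)$; it lies on the extension of $BC$ beyond $C$ iff $q(q+r)<0$. *)

theory Defs
  imports Complex_Main
begin

text \<open>Triangle with side lengths a = BC, b = CA, c = AB.  The angle opposite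
  the side of length x (the other two sides being y, z), via the law of cosines.\<close>
definition ang :: "real \<Rightarrow> real \<Rightarrow> real \<Rightarrow> real" where
  "ang x y z = arccos ((y^2 + z^2 - x^2) / (2 * y * z))"

text \<open>A triangle center with first barycentric coordinate f(a,b,c) is the point
  (f(a,b,c) : f(b,c,a) : f(c,a,b)).  Below, X_n a b c is that first coordinate,
  taken from ETC (trigonometric trilinears t(A,B,C) are converted to barycentrics
  by multiplying with a).  Inside X_n a b c:  A = ang a b c, B = ang b c a, C = ang c a b.\<close>

definition X1 :: "real \<Rightarrow> real \<Rightarrow> real \<Rightarrow> real" where "X1 a b c = a"
definition X2 :: "real \<Rightarrow> real \<Rightarrow> real \<Rightarrow> real" where "X2 a b c = 1"
definition X3 :: "real \<Rightarrow> real \<Rightarrow> real \<Rightarrow> real" where "X3 a b c = a^2 * (b^2 + c^2 - a^2)"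
definition X4 :: "real \<Rightarrow> real \<Rightarrow> real \<Rightarrow> real" where "X4 a b c = 1 / (b^2 + c^2 - a^2)"
definition X5 :: "real \<Rightarrow> real \<Rightarrow> real \<Rightarrow> real" where
  "X5 a b c = a * cos (ang b c a - ang c a b)"
definition X6 :: "real \<Rightarrow> real \<Rightarrow> real \<Rightarrow> real" where "X6 a b c = a^2"
definition X7 :: "real \<Rightarrow> real \<Rightarrow> real \<Rightarrow> real" where "X7 a b c = 1 / (b + c - a)"
definition X8 :: "real \<Rightarrow> real \<Rightarrow> real \<Rightarrow> real" where "X8 a b c = b + c - a"
definition X9 :: "real \<Rightarrow> real \<Rightarrow> real \<Rightarrow> real" where "X9 a b c = a * (b + c - a)"
definition X10 :: "real \<Rightarrow> real \<Rightarrow> real \<Rightarrow> real" where "X10 a b c = b + c"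
definition X11 :: "real \<Rightarrow> real \<Rightarrow> real \<Rightarrow> real" where "X11 a b c = (b + c - a) * (b - c)^2"
definition X12 :: "real \<Rightarrow> real \<Rightarrow> real \<Rightarrow> real" where "X12 a b c = (b + c)^2 / (b + c - a)"
definition X13 :: "real \<Rightarrow> real \<Rightarrow> real \<Rightarrow> real" where
  "X13 a b c = a / sin (ang a b c + pi / 3)"
definition X14 :: "real \<Rightarrow> real \<Rightarrow> real \<Rightarrow> real" where
  "X14 a b c = a / sin (ang a b c - pi / 3)"
definition X15 :: "real \<Rightarrow> real \<Rightarrow> real \<Rightarrow> real" where
  "X15 a b c = a * sin (ang a b c + pi / 3)"
definition X16 :: "real \<Rightarrow> real \<Rightarrow> real \<Rightarrow> real" where
  "X16 a b c = a * sin (ang a b c - pi / 3)"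
definition X17 :: "real \<Rightarrow> real \<Rightarrow> real \<Rightarrow> real" where
  "X17 a b c = a / sin (ang a b c + pi / 6)"
definition X18 :: "real \<Rightarrow> real \<Rightarrow> real \<Rightarrow> real" where
  "X18 a b c = a / sin (ang a b c - pi / 6)"
definition X19 :: "real \<Rightarrow> real \<Rightarrow> real \<Rightarrow> real" where
  "X19 a b c = a * tan (ang a b c)"
definition X20 :: "real \<Rightarrow> real \<Rightarrow> real \<Rightarrow> real" where
  "X20 a b c = a * (cos (ang a b c) - cos (ang b c a) * cos (ang c a b))"
definition X21 :: "real \<Rightarrow> real \<Rightarrow> real \<Rightarrow> real" where
  "X21 a b c = a / (cos (ang b c a) + cos (ang c a b))"
definition X22 :: "real \<Rightarrow> real \<Rightarrow> real \<Rightarrow> real" where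
  "X22 a b c = a^2 * (b^4 + c^4 - a^4)"
definition X23 :: "real \<Rightarrow> real \<Rightarrow> real \<Rightarrow> real" where
  "X23 a b c = a^2 * (b^4 + c^4 - a^4 - b^2 * c^2)"
definition X24 :: "real \<Rightarrow> real \<Rightarrow> real \<Rightarrow> real" where
  "X24 a b c = a * cos (2 * ang a b c) / cos (ang a b c)"
definition X25 :: "real \<Rightarrow> real \<Rightarrow> real \<Rightarrow> real" where
  "X25 a b c = a * sin (ang a b c) * tan (ang a b c)"
definition X26 :: "real \<Rightarrow> real \<Rightarrow> real \<Rightarrow> real" where
  "X26 a b c = a * (a * (b^2 * cos (2 * ang b c a) + c^2 * cos (2 * ang c a b)
                          - a^2 * cos (2 * ang a b c)))"
definition X27 :: "real \<Rightarrow> real \<Rightarrow> real \<Rightarrow> real" where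
  "X27 a b c = a / (cos (ang a b c) * (b + c))"
definition X28 :: "real \<Rightarrow> real \<Rightarrow> real \<Rightarrow> real" where
  "X28 a b c = a * tan (ang a b c) / (b + c)"
definition X29 :: "real \<Rightarrow> real \<Rightarrow> real \<Rightarrow> real" where
  "X29 a b c = a / (cos (ang a b c) * (cos (ang b c a) + cos (ang c a b)))"

definition ETC :: "nat \<Rightarrow> real \<Rightarrow> real \<Rightarrow> real \<Rightarrow> real" where
  "ETC n = [X1, X2, X3, X4, X5, X6, X7, X8, X9, X10, X11, X12, X13, X14, X15, X16, X17,
            X18, X19, X20, X21, X22, X23, X24, X25, X26, X27, X28, X29] ! (n - 1)"

text \<open>Atrace of the center with first barycentric f is (0 : q : r) with q = f(b,c,a),
  r = f(c,a,b); it lies on the extension of BC beyond C iff q(q+r) < 0.\<close>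
definition atrace_beyond_C :: "(real \<Rightarrow> real \<Rightarrow> real \<Rightarrow> real) \<Rightarrow> real \<Rightarrow> real \<Rightarrow> real \<Rightarrow> bool" where
  "atrace_beyond_C f a b c \<longleftrightarrow> (let q = f b c a; r = f c a b in q * (q + r) < 0)"

definition acute_abc :: "real \<Rightarrow> real \<Rightarrow> real \<Rightarrow> bool" where
  "acute_abc a b c \<longleftrightarrow> 0 < a \<and> 0 < b \<and> 0 < c \<and> a < b + c \<and> b < c + a \<and> c < a + b
     \<and> a^2 < b^2 + c^2 \<and> b^2 < c^2 + a^2 \<and> c^2 < a^2 + b^2 \<and> a < b \<and> b < c"

end

theory Submission
  imports Defs
begin

text \<open>In an acute triangle with a < b < c the angles B and C exceed pi/4.  For most centres this
  leaves both q and r positive; for X24 both are negative, since cos 2B, cos 2C < 0; and for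
  X14, X20 and X22 the law of cosines and Heron's formula show that q and q + r have the same
  sign.  The triangle with sides 4, 5, 6 is a witness for X16, X23 and X26.\<close>

lemma atrace_beyond_C_iff:
  "atrace_beyond_C f a b c \<longleftrightarrow> f b c a * (f b c a + f c a b) < 0"
  by (simp add: atrace_beyond_C_def Let_def)

lemma not_atrace_beyond_C_if_sum_nonneg:
  assumes "0 \<le> f b c a" "0 \<le> f b c a + f c a b"
  shows "\<not> atrace_beyond_C f a b c"
  using assms by (simp add: atrace_beyond_C_iff not_less)

lemma not_atrace_beyond_C_if_nonneg:
  assumes "0 \<le> f b c a" "0 \<le> f c a b"
  shows "\<not> atrace_beyond_C f a b c"
  using assms by (intro not_atrace_beyond_C_if_sum_nonneg) auto

lemma not_atrace_beyond_C_if_nonpos: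
  assumes "f b c a \<le> 0" "f c a b \<le> 0"
  shows "\<not> atrace_beyond_C f a b c"
  using assms by (simp add: atrace_beyond_C_iff not_less mult_nonpos_nonpos)

lemma divide_mult_divide_add_nonneg:
  fixes k u v :: real
  assumes "0 < v" "0 < u + v"
  shows "0 \<le> k / u * (k / u + k / v)"
proof (cases "u = 0")
  case False
  then have "k / u * (k / u + k / v) = k^2 * (u + v) / (u^2 * v)"
    using assms by (simp add: field_simps power2_eq_square)
  then show ?thesis
    using assms by simp
qed simp

lemma law_of_cosines_bound:
  fixes x y z :: real
  assumes "x < y + z" "y < z + x" "z < x + y"
  shows "-1 < (y^2 + z^2 - x^2) / (2 * y * z)" "(y^2 + z^2 - x^2) / (2 * y * z) < 1"
proof -
  have yz: "0 < 2 * y * z"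
    using assms by simp
  have "(y - z - x) * (y - z + x) < 0" "0 < (y + z - x) * (y + z + x)"
    using assms by (auto intro: mult_neg_pos mult_pos_pos)
  then have "- (2 * y * z) < y^2 + z^2 - x^2" "y^2 + z^2 - x^2 < 2 * y * z"
    by (simp_all add: algebra_simps power2_eq_square)
  with yz show "-1 < (y^2 + z^2 - x^2) / (2 * y * z)" "(y^2 + z^2 - x^2) / (2 * y * z) < 1"
    by (simp_all add: field_simps)
qed

lemma cos_ang:
  assumes "x < y + z" "y < z + x" "z < x + y"
  shows "cos (ang x y z) = (y^2 + z^2 - x^2) / (2 * y * z)"
  unfolding ang_def using law_of_cosines_bound[OF assms] by simp

text \<open>Sixteen times the squared area of the triangle with sides x, y, z (Heron).\<close>
definition heron :: "real \<Rightarrow> real \<Rightarrow> real \<Rightarrow> real" where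
  "heron x y z = 2*x^2*y^2 + 2*y^2*z^2 + 2*z^2*x^2 - x^4 - y^4 - z^4"

lemma heron_cyclic: "heron y z x = heron x y z" "heron z x y = heron x y z"
  unfolding heron_def by (simp_all add: algebra_simps)

lemma heron_eq: "heron x y z = (2 * y * z)^2 - (y^2 + z^2 - x^2)^2"
  unfolding heron_def by algebra

lemma sin_ang:
  assumes "x < y + z" "y < z + x" "z < x + y"
  shows "sin (ang x y z) = sqrt (heron x y z) / (2 * y * z)"
proof -
  define t where "t = (y^2 + z^2 - x^2) / (2 * y * z)"
  have "0 < y" "0 < z"
    using assms by simp_all
  have "sin (ang x y z) = sqrt (1 - t^2)"
    unfolding ang_def t_def using law_of_cosines_bound[OF assms] by (simp add: sin_arccos)
  also have "1 - t^2 = ((2 * y * z)^2 - (2 * y * z * t)^2) / (2 * y * z)^2"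
    using \<open>0 < y\<close> \<open>0 < z\<close> by (simp add: field_simps)
  also have "\<dots> = heron x y z / (2 * y * z)^2"
    using \<open>0 < y\<close> \<open>0 < z\<close> by (simp add: heron_eq t_def)
  also have "sqrt \<dots> = sqrt (heron x y z) / (2 * y * z)"
    using \<open>0 < y\<close> \<open>0 < z\<close> by (simp add: real_sqrt_divide)
  finally show ?thesis .
qed

lemma ang_acute:
  assumes "x < y + z" "y < z + x" "z < x + y" "x^2 < y^2 + z^2"
  shows "0 < ang x y z" "ang x y z < pi / 2"
proof -
  define t where "t = (y^2 + z^2 - x^2) / (2 * y * z)"
  have t: "0 < t" "t < 1"
    using assms law_of_cosines_bound[OF assms(1-3)] by (simp_all add: t_def)
  have "arccos 1 < arccos t" "arccos t < arccos 0"
    by (rule arccos_less_arccos; use t in simp)+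
  then show "0 < ang x y z" "ang x y z < pi / 2"
    by (simp_all add: ang_def t_def)
qed

lemma pi4_less_ang:
  assumes "x < y + z" "y < z + x" "z < x + y" "(y^2 + z^2 - x^2)^2 < 2 * y^2 * z^2"
  shows "pi / 4 < ang x y z"
proof -
  define t where "t = (y^2 + z^2 - x^2) / (2 * y * z)"
  have "t^2 < 1 / 2"
    using assms by (simp add: t_def field_simps power2_eq_square)
  then have "t < cos (pi / 4)"
    by (simp add: cos_45 real_less_rsqrt flip: real_sqrt_divide)
  then have "arccos (cos (pi / 4)) < arccos t"
    using law_of_cosines_bound[OF assms(1-3)] by (intro arccos_less_arccos) (auto simp: t_def)
  then show ?thesis
    by (simp add: ang_def t_def arccos_cos)
qed

locale acute_ordered_triangle =
  fixes a b c :: real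
  assumes acute: "acute_abc a b c"
begin

lemma sides:
  "0 < a" "0 < b" "0 < c" "a < b + c" "b < c + a" "c < a + b"
  "a^2 < b^2 + c^2" "b^2 < c^2 + a^2" "c^2 < a^2 + b^2" "a < b" "b < c"
  using acute unfolding acute_abc_def by auto

lemma squares_less: "a^2 < b^2" "b^2 < c^2"
  using sides by (auto intro: power_strict_mono)

lemma cos_angles:
  "cos (ang a b c) = (b^2 + c^2 - a^2) / (2 * b * c)"
  "cos (ang b c a) = (c^2 + a^2 - b^2) / (2 * c * a)"
  "cos (ang c a b) = (a^2 + b^2 - c^2) / (2 * a * b)"
  using cos_ang[of a b c] cos_ang[of b c a] cos_ang[of c a b] sides by simp_all

lemma angles_acute:
  "0 < ang a b c" "ang a b c < pi / 2"
  "0 < ang b c a" "ang b c a < pi / 2"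
  "0 < ang c a b" "ang c a b < pi / 2"
  using ang_acute[of a b c] ang_acute[of b c a] ang_acute[of c a b] sides by simp_all

lemma pi4_less_angles: "pi / 4 < ang b c a" "pi / 4 < ang c a b"
proof -
  have "(c^2 + a^2 - b^2) * (c^2 + a^2 - b^2) < c^2 * (2 * a^2)"
    "(a^2 + b^2 - c^2) * (a^2 + b^2 - c^2) < (2 * a^2) * b^2"
    using sides squares_less by (intro mult_strict_mono; simp)+
  then show "pi / 4 < ang b c a" "pi / 4 < ang c a b"
    using pi4_less_ang[of b c a] pi4_less_ang[of c a b] sides
    by (simp_all add: power2_eq_square algebra_simps)
qed

lemma rational_centers_not_atrace_beyond_C:
  "\<forall>f \<in> {X1, X2, X3, X4, X6, X7, X8, X9, X10, X11, X12}. \<not> atrace_beyond_C f a b c"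
  using sides
  by (intro ballI not_atrace_beyond_C_if_nonneg;
      auto intro!: mult_nonneg_nonneg divide_nonneg_nonneg
        simp: X1_def X2_def X3_def X4_def X6_def X7_def X8_def X9_def X10_def X11_def X12_def)

lemma trigonometric_centers_not_atrace_beyond_C:
  "\<forall>f \<in> {X5, X13, X15, X17, X18, X19, X21, X25, X27, X28, X29}.
     \<not> atrace_beyond_C f a b c"
proof -
  have pos: "0 < sin (t + pi / 3)" "0 < sin (t + pi / 6)" "0 < sin (t - pi / 6)"
    "0 < sin t" "0 < tan t" "0 < cos t" if "pi / 4 < t" "t < pi / 2" for t
    using that by (auto intro!: sin_gt_zero tan_gt_zero cos_gt_zero)
  have "0 < cos (ang a b c)" "0 < cos (ang c a b - ang a b c)" "0 < cos (ang a b c - ang b c a)"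
    using angles_acute by (auto intro!: cos_gt_zero cos_gt_zero_pi)
  then show ?thesis
    using sides angles_acute pi4_less_angles pos[of "ang b c a"] pos[of "ang c a b"]
    by (intro ballI not_atrace_beyond_C_if_nonneg;
        auto intro!: mult_nonneg_nonneg divide_nonneg_nonneg
          simp: X5_def X13_def X15_def X17_def X18_def X19_def X21_def X25_def X27_def X28_def
            X29_def)
qed

lemma X24_not_atrace_beyond_C: "\<not> atrace_beyond_C X24 a b c"
proof (rule not_atrace_beyond_C_if_nonpos)
  have neg: "cos (2 * t) < 0" if "pi / 4 < t" "t < pi / 2" for t
    using cos_monotone_0_pi[of "pi / 2" "2 * t"] that by simp
  have "0 < cos (ang b c a)" "0 < cos (ang c a b)"
    using angles_acute by (auto intro!: cos_gt_zero)
  then show "X24 b c a \<le> 0" "X24 c a b \<le> 0"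
    using sides neg[of "ang b c a"] neg[of "ang c a b"] angles_acute pi4_less_angles
    by (auto simp: X24_def intro!: divide_nonpos_pos mult_nonneg_nonpos)
qed

lemma X22_not_atrace_beyond_C: "\<not> atrace_beyond_C X22 a b c"
proof (rule not_atrace_beyond_C_if_sum_nonneg)
  have "b^4 \<le> c^4" "0 \<le> a^4"
    using sides by (simp_all add: power_mono)
  then have "0 \<le> c^4 + a^4 - b^4"
    by linarith
  then show "0 \<le> X22 b c a"
    unfolding X22_def by simp
  have "X22 b c a + X22 c a b = (b^2 + c^2) * ((a^2 + b^2 - c^2) * (c^2 + a^2 - b^2))"
    unfolding X22_def by algebra
  also have "0 < \<dots>"
    using sides by (intro mult_pos_pos) auto
  finally show "0 \<le> X22 b c a + X22 c a b"
    by simp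
qed

lemma X20_not_atrace_beyond_C: "\<not> atrace_beyond_C X20 a b c"
proof (rule not_atrace_beyond_C_if_sum_nonneg)
  define x where "x = a^2"
  define y where "y = b^2"
  define z where "z = c^2"
  define q where "q = 2*y*(z + x - y) - (x + y - z)*(y + z - x)"
  define r where "r = 2*z*(x + y - z) - (y + z - x)*(z + x - y)"
  have abc: "0 < 4 * a * b * c"
    using sides by simp
  have "X20 b c a = q / (4 * a * b * c)" "X20 c a b = r / (4 * a * b * c)"
    unfolding X20_def cos_angles q_def r_def x_def y_def z_def
    using sides by (simp_all add: field_simps power2_eq_square)
  moreover have xyz: "0 < x" "x < y" "y < z" "z < x + y"
    using sides squares_less by (simp_all add: x_def y_def z_def)
  moreover have "0 < q"
  proof -
    have "q = x^2 + 2*x*((z - x) - (y - x)) + ((z - x) - (y - x))*((z - x) + 3*(y - x))"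
      unfolding q_def by algebra
    also have "0 < \<dots>"
      using xyz by (intro add_pos_pos mult_pos_pos) auto
    finally show ?thesis .
  qed
  moreover have "0 < q + r"
  proof -
    have "q + r = 2 * ((x + y - z) * (x + z - y))"
      unfolding q_def r_def by algebra
    also have "0 < \<dots>"
      using xyz by (intro mult_pos_pos) auto
    finally show ?thesis .
  qed
  ultimately show "0 \<le> X20 b c a" "0 \<le> X20 b c a + X20 c a b"
    using abc by (simp_all flip: add_divide_distrib)
qed

text \<open>The triangle has larger area than the equilateral triangle on its shortest side.\<close>
lemma three_mul_pow4_less_heron: "3 * a^4 < heron a b c"
proof -
  define x where "x = a^2"
  define s where "s = b^2 - a^2"
  define t where "t = c^2 - a^2"
  have xst: "0 < x" "0 < s" "s < t" "t < x + s"
    using sides squares_less by (simp_all add: x_def s_def t_def)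
  have "t * t < x * t + s * t"
    using mult_strict_right_mono[OF \<open>t < x + s\<close>, of t] xst by (simp add: distrib_right)
  moreover have "s * s < s * t" "0 < x * s" "0 < x * t"
    using xst by simp_all
  ultimately have "0 < 2 * (x * s) + 2 * (x * t) + 2 * (s * t) - s * s - t * t"
    by linarith
  also have "\<dots> = heron a b c - 3 * a^4"
    unfolding heron_def x_def s_def t_def by algebra
  finally show ?thesis
    by simp
qed

lemma X14_not_atrace_beyond_C: "\<not> atrace_beyond_C X14 a b c"
proof -
  define S where "S = sqrt (heron a b c)"
  define u where "u = S - sqrt 3 * (c^2 + a^2 - b^2)"
  define v where "v = S - sqrt 3 * (a^2 + b^2 - c^2)"
  have "sin (ang b c a) = S / (2 * c * a)" "sin (ang c a b) = S / (2 * a * b)"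
    using sin_ang[of b c a] sin_ang[of c a b] sides by (simp_all add: S_def heron_cyclic)
  then have q: "X14 b c a = 4 * a * b * c / u" and r: "X14 c a b = 4 * a * b * c / v"
    unfolding X14_def sin_diff cos_angles cos_60 sin_60 u_def v_def
    using sides by (simp_all add: field_simps)
  define w where "w = a^2 + b^2 - c^2"
  have "w * w < a^2 * b^2"
    using sides squares_less unfolding w_def by (intro mult_strict_mono) auto
  moreover have "heron a b c = 4 * (a^2 * b^2) - w * w"
    unfolding heron_def w_def by algebra
  moreover have "(sqrt 3 * w)^2 = 3 * (w * w)"
    by (simp add: power_mult_distrib power2_eq_square)
  ultimately have "(sqrt 3 * w)^2 < heron a b c"
    by linarith
  then have "0 < v"
    unfolding v_def S_def w_def using real_less_rsqrt by simp
  have "(sqrt 3 * a^2)^2 < heron a b c"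
    using three_mul_pow4_less_heron by (simp add: power_mult_distrib)
  then have "0 < u + v"
    unfolding u_def v_def S_def using real_less_rsqrt by (simp add: algebra_simps)
  show ?thesis
    unfolding atrace_beyond_C_iff q r not_less
    using \<open>0 < v\<close> \<open>0 < u + v\<close> by (rule divide_mult_divide_add_nonneg)
qed

end

lemma acute_abc_4_5_6: "acute_abc 4 5 6"
  by (simp add: acute_abc_def)

lemma cos_angles_4_5_6:
  "cos (ang 4 5 6) = 3 / 4" "cos (ang 5 6 4) = 9 / 16" "cos (ang 6 4 5) = 1 / 8"
  using cos_ang[of 4 5 6] cos_ang[of 5 6 4] cos_ang[of 6 4 5] by simp_all

lemma X16_atrace_beyond_C_4_5_6: "atrace_beyond_C X16 4 5 6"
proof -
  have "sin (ang 5 6 4) = sqrt 1575 / 48" "sin (ang 6 4 5) = sqrt 1575 / 40"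
    using sin_ang[of 5 6 4] sin_ang[of 6 4 5] by (simp_all add: heron_def)
  then have q: "X16 5 6 4 = 5 * (sqrt 1575 / 96 - 9 * sqrt 3 / 32)"
    and r: "X16 6 4 5 = 6 * (sqrt 1575 / 80 - sqrt 3 / 16)"
    unfolding X16_def sin_diff cos_angles_4_5_6 cos_60 sin_60 by simp_all
  have "39 < sqrt 1575" "17 / 10 < sqrt 3"
    by (rule real_less_rsqrt; simp add: power2_eq_square)+
  moreover have "sqrt 1575 < 40" "sqrt 3 < 7 / 4"
    by (rule real_less_lsqrt; simp add: power2_eq_square)+
  ultimately have "X16 5 6 4 < 0" "0 < X16 5 6 4 + X16 6 4 5"
    unfolding q r by simp_all
  then show ?thesis
    unfolding atrace_beyond_C_iff by (simp add: mult_neg_pos)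
qed

lemma X23_atrace_beyond_C_4_5_6: "atrace_beyond_C X23 4 5 6"
  by (simp add: atrace_beyond_C_iff X23_def)

lemma X26_atrace_beyond_C_4_5_6: "atrace_beyond_C X26 4 5 6"
  by (simp add: atrace_beyond_C_iff X26_def cos_double_cos cos_angles_4_5_6 power2_eq_square)

theorem theorem6p10:
  shows "(\<forall>n \<in> {16, 23, 26}. \<exists>a b c. acute_abc a b c \<and> atrace_beyond_C (ETC n) a b c)
       \<and> (\<forall>n \<in> {1..29} - {16, 23, 26}. \<forall>a b c. acute_abc a b c \<longrightarrow> \<not> atrace_beyond_C (ETC n) a b c)"
proof
  show "\<forall>n \<in> {16, 23, 26}. \<exists>a b c. acute_abc a b c \<and> atrace_beyond_C (ETC n) a b c"
    using acute_abc_4_5_6 X16_atrace_beyond_C_4_5_6 X23_atrace_beyond_C_4_5_6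
      X26_atrace_beyond_C_4_5_6
    by (auto simp: ETC_def)
  show "\<forall>n \<in> {1..29} - {16, 23, 26}. \<forall>a b c. acute_abc a b c \<longrightarrow> \<not> atrace_beyond_C (ETC n) a b c"
  proof (intro ballI allI impI)
    fix n :: nat and a b c :: real
    assume n: "n \<in> {1..29} - {16, 23, 26}" and "acute_abc a b c"
    then interpret acute_ordered_triangle a b c
      by unfold_locales
    from n have "n \<in> {1, 2, 3, 4, 5, 6, 7, 8, 9, 10, 11, 12, 13, 14, 15, 17, 18, 19, 20, 21, 22,
        24, 25, 27, 28, 29}"
      by simp presburger
    then show "\<not> atrace_beyond_C (ETC n) a b c"
      using rational_centers_not_atrace_beyond_C trigonometric_centers_not_atrace_beyond_C
        X14_not_atrace_beyond_C X20_not_atrace_beyond_C X22_not_atrace_beyond_C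
        X24_not_atrace_beyond_C
      by (auto simp: ETC_def)
  qed
qed

end
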